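(* The functor $\mathrm{Up}\circ\mathrm{Dn}:\mathbf{Poset}\to\mathbf{Poset}$ can be given a monad structure $(\mathrm{Up}\,\mathrm{Dn},\eta^1,\mu^1)$.
   Context: $\mathbf{Poset}$ is the category of partially ordered sets and monotone maps. $\mathrm{Up}$ sends a poset $(X,\le)$ to the set of its upward closed subsets ordered by reverse inclusion $\supseteq$, and a monotone $f:X\to Y$ to $P\mapsto\{y\in Y\mid \exists x\in P,\ f(x)\le y\}$. $\mathrm{Dn}$ sends a poset $(X,\le)$ to the set of its downward closed subsets ordered by inclusion $\subseteq$, and a monotone $f:X\to Y$ to $P\mapsto\{y\in Y\mid\exists x\in P,\ y\le f(x)\}$. A monad on a category is a triple $(T,\eta,\mu)$ with $T$ an endofunctor and natural transformations $\eta:\mathrm{id}\Rightarrow T$, $\mu:TT\Rightarrow T$ satisfying $\mu_X\circ\eta_{TX}=\mathrm{id}=\mu_X\circ T(\eta_X)$ and $\mu_X\circ T(\mu_X)=\mu_X\circ\mu_{TX}$. *)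

theory Defs
  imports Main
begin

text \<open>A poset is represented by its carrier set together with its order relation.
  Morphisms of Poset are monotone maps, compared extensionally on the carrier.\<close>

type_synonym 'a poset = "'a set \<times> ('a \<Rightarrow> 'a \<Rightarrow> bool)"

definition is_poset :: "'a poset \<Rightarrow> bool" where
  "is_poset X \<longleftrightarrow>
     (\<forall>x\<in>fst X. snd X x x) \<and>
     (\<forall>x\<in>fst X. \<forall>y\<in>fst X. snd X x y \<and> snd X y x \<longrightarrow> x = y) \<and>
     (\<forall>x\<in>fst X. \<forall>y\<in>fst X. \<forall>z\<in>fst X. snd X x y \<and> snd X y z \<longrightarrow> snd X x z)"

definition mono_map :: "'a poset \<Rightarrow> 'b poset \<Rightarrow> ('a \<Rightarrow> 'b) \<Rightarrow> bool" where
  "mono_map X Y f \<longleftrightarrow>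
     (\<forall>x\<in>fst X. f x \<in> fst Y) \<and>
     (\<forall>x\<in>fst X. \<forall>y\<in>fst X. snd X x y \<longrightarrow> snd Y (f x) (f y))"

definition Dn :: "'a poset \<Rightarrow> 'a set poset" where
  "Dn X = ({P. P \<subseteq> fst X \<and> (\<forall>x\<in>P. \<forall>y\<in>fst X. snd X y x \<longrightarrow> y \<in> P)},
           (\<lambda>P Q. P \<subseteq> Q))"

definition Up :: "'a poset \<Rightarrow> 'a set poset" where
  "Up X = ({P. P \<subseteq> fst X \<and> (\<forall>x\<in>P. \<forall>y\<in>fst X. snd X x y \<longrightarrow> y \<in> P)},
           (\<lambda>P Q. Q \<subseteq> P))"

text \<open>Action on morphisms; the first argument is the codomain poset Y of f.\<close>
definition Dn_map :: "'b poset \<Rightarrow> ('a \<Rightarrow> 'b) \<Rightarrow> 'a set \<Rightarrow> 'b set" where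
  "Dn_map Y f P = {y \<in> fst Y. \<exists>x\<in>P. snd Y y (f x)}"

definition Up_map :: "'b poset \<Rightarrow> ('a \<Rightarrow> 'b) \<Rightarrow> 'a set \<Rightarrow> 'b set" where
  "Up_map Y f P = {y \<in> fst Y. \<exists>x\<in>P. snd Y (f x) y}"

definition UD :: "'a poset \<Rightarrow> 'a set set poset" where
  "UD X = Up (Dn X)"

definition UD_map :: "'b poset \<Rightarrow> ('a \<Rightarrow> 'b) \<Rightarrow> 'a set set \<Rightarrow> 'b set set" where
  "UD_map Y f = Up_map (Dn Y) (Dn_map Y f)"

text \<open>The unit eta^1 (composite of the units of Dn and Up) and the multiplication mu^1.\<close>
definition eta1 :: "'a poset \<Rightarrow> 'a \<Rightarrow> 'a set set" where
  "eta1 X x = {D \<in> fst (Dn X). x \<in> D}"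

definition mu1 :: "'a poset \<Rightarrow> 'a set set set set \<Rightarrow> 'a set set" where
  "mu1 X AA = {D \<in> fst (Dn X). \<exists>DD\<in>AA. \<forall>U\<in>DD. D \<in> U}"

end

theory Submission
  imports Defs
begin

text \<open>Since elements of UD X are up-closed families of down-sets, the existential
  quantifiers in UD_map and mu1 can be eliminated: UD_map Y f T consists of the down-sets D
  whose preimage under f lies in T, and mu1 X AA of the down-sets D whose evaluation family
  (the up-sets containing D) lies in AA. In this form UD is the monotone neighbourhood monad
  restricted to down-sets, and every monad law and naturality square reduces to an identity
  between preimages of evaluation families. The only order axiom this uses is reflexivity of
  the codomain of f, which puts f x into Dn_map Y f P for x in P.\<close>

lemma snd_Dn [simp]: "snd (Dn X) = (\<subseteq>)"
  by (simp add: Dn_def fun_eq_iff)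

lemma mem_Dn_iff:
  "P \<in> fst (Dn X) \<longleftrightarrow> P \<subseteq> fst X \<and> (\<forall>x\<in>P. \<forall>y\<in>fst X. snd X y x \<longrightarrow> y \<in> P)"
  by (simp add: Dn_def)

lemma mem_UD_iff:
  "T \<in> fst (UD X) \<longleftrightarrow> T \<subseteq> fst (Dn X) \<and> (\<forall>P\<in>T. \<forall>Q\<in>fst (Dn X). P \<subseteq> Q \<longrightarrow> Q \<in> T)"
  by (simp add: UD_def Up_def)

lemma snd_UD [simp]: "snd (UD X) = (\<lambda>P Q. Q \<subseteq> P)"
  by (simp add: UD_def Up_def)

lemma is_poset_UD: "is_poset (UD X)"
  by (auto simp: is_poset_def)

lemma vimage_in_Dn:
  assumes "mono_map X Y f" and "D \<in> fst (Dn Y)"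
  shows "fst X \<inter> f -` D \<in> fst (Dn X)"
  using assms by (auto simp: mem_Dn_iff mono_map_def)

definition eval_at :: "'a poset \<Rightarrow> 'a set \<Rightarrow> 'a set set set" where
  "eval_at X D = {U \<in> fst (UD X). D \<in> U}"

lemma mem_eval_at_iff [simp]: "U \<in> eval_at X D \<longleftrightarrow> U \<in> fst (UD X) \<and> D \<in> U"
  by (simp add: eval_at_def)

lemma eval_at_in_Dn: "eval_at X D \<in> fst (Dn (UD X))"
  by (auto simp: mem_Dn_iff mem_UD_iff)

lemma eval_at_mono:
  assumes "D \<subseteq> E" and "E \<in> fst (Dn X)"
  shows "eval_at X D \<subseteq> eval_at X E"
  using assms by (auto simp: mem_UD_iff)

lemma eta1_in_UD: "eta1 X x \<in> fst (UD X)"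
  by (auto simp: eta1_def mem_UD_iff)

lemma UD_map_in_UD: "UD_map Y f T \<in> fst (UD Y)"
  by (auto simp: UD_map_def Up_map_def Up_def UD_def)

lemma mono_map_eta1: "mono_map X (UD X) (eta1 X)"
  unfolding mono_map_def by (intro conjI ballI impI eta1_in_UD) (auto simp: eta1_def mem_Dn_iff)

lemma mono_map_UD_map: "mono_map (UD X) (UD Y) (UD_map Y f)"
  unfolding mono_map_def by (intro conjI ballI impI UD_map_in_UD) (auto simp: UD_map_def Up_map_def)

lemma UD_map_eq_vimage:
  assumes Y: "is_poset Y" and f: "mono_map X Y f" and T: "T \<in> fst (UD X)"
  shows "UD_map Y f T = {D \<in> fst (Dn Y). fst X \<inter> f -` D \<in> T}"
proof (intro set_eqI iffI)
  fix D assume "D \<in> UD_map Y f T"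
  then obtain P where D: "D \<in> fst (Dn Y)" and P: "P \<in> T" and sub: "Dn_map Y f P \<subseteq> D"
    by (auto simp: UD_map_def Up_map_def)
  have "P \<in> fst (Dn X)"
    using P T by (auto simp: mem_UD_iff)
  then have "P \<subseteq> fst X"
    by (simp add: mem_Dn_iff)
  moreover have "f x \<in> D" if "x \<in> P" for x
  proof -
    have "f x \<in> fst Y"
      using f \<open>P \<subseteq> fst X\<close> that by (auto simp: mono_map_def)
    with Y that have "f x \<in> Dn_map Y f P"
      by (auto simp: Dn_map_def is_poset_def)
    with sub show ?thesis by blast
  qed
  ultimately have "P \<subseteq> fst X \<inter> f -` D"
    by blast
  then have "fst X \<inter> f -` D \<in> T"
    using T P vimage_in_Dn[OF f D] by (auto simp: mem_UD_iff)
  with D show "D \<in> {D \<in> fst (Dn Y). fst X \<inter> f -` D \<in> T}" by blast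
next
  fix D assume "D \<in> {D \<in> fst (Dn Y). fst X \<inter> f -` D \<in> T}"
  then have D: "D \<in> fst (Dn Y)" and P: "fst X \<inter> f -` D \<in> T" by auto
  have "Dn_map Y f (fst X \<inter> f -` D) \<subseteq> D"
    using D by (auto simp: Dn_map_def mem_Dn_iff)
  with D P show "D \<in> UD_map Y f T"
    by (auto simp: UD_map_def Up_map_def)
qed

lemma mu1_eq_eval_at:
  assumes AA: "AA \<in> fst (UD (UD X))"
  shows "mu1 X AA = {D \<in> fst (Dn X). eval_at X D \<in> AA}"
proof (intro set_eqI iffI)
  fix D assume "D \<in> mu1 X AA"
  then obtain DD where D: "D \<in> fst (Dn X)" and DD: "DD \<in> AA" and "\<forall>U\<in>DD. D \<in> U"
    by (auto simp: mu1_def)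
  moreover have "DD \<in> fst (Dn (UD X))"
    using AA DD by (auto simp: mem_UD_iff)
  then have "DD \<subseteq> fst (UD X)"
    by (simp add: mem_Dn_iff)
  ultimately have "DD \<subseteq> eval_at X D"
    by auto
  then have "eval_at X D \<in> AA"
    using AA DD eval_at_in_Dn[of X D] by (auto simp: mem_UD_iff)
  with D show "D \<in> {D \<in> fst (Dn X). eval_at X D \<in> AA}" by blast
next
  fix D assume "D \<in> {D \<in> fst (Dn X). eval_at X D \<in> AA}"
  moreover have "\<forall>U\<in>eval_at X D. D \<in> U"
    by simp
  ultimately show "D \<in> mu1 X AA"
    unfolding mu1_def by blast
qed

lemma mu1_in_UD:
  assumes AA: "AA \<in> fst (UD (UD X))"
  shows "mu1 X AA \<in> fst (UD X)"
proof -
  have "eval_at X E \<in> AA"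
    if "eval_at X D \<in> AA" "D \<subseteq> E" "E \<in> fst (Dn X)" for D E
    using that AA eval_at_mono[of D E X] eval_at_in_Dn[of X E] by (auto simp: mem_UD_iff)
  then show ?thesis
    unfolding mu1_eq_eval_at[OF AA] by (auto simp: mem_UD_iff)
qed

lemma mono_map_mu1: "mono_map (UD (UD X)) (UD X) (mu1 X)"
proof -
  have "mu1 X BB \<subseteq> mu1 X AA" if "BB \<subseteq> AA" for AA BB
    using that unfolding mu1_def by blast
  then show ?thesis
    unfolding mono_map_def using mu1_in_UD[of _ X] by auto
qed

lemma vimage_eta1_eval_at:
  assumes "D \<in> fst (Dn X)"
  shows "fst X \<inter> eta1 X -` eval_at X D = D"
proof -
  have "eta1 X x \<in> eval_at X D \<longleftrightarrow> x \<in> D" for x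
    using assms eta1_in_UD[of X x] by (simp add: eta1_def)
  moreover have "D \<subseteq> fst X"
    using assms by (simp add: mem_Dn_iff)
  ultimately show ?thesis
    by blast
qed

lemma vimage_mu1_eval_at:
  assumes "D \<in> fst (Dn X)"
  shows "fst (UD (UD X)) \<inter> mu1 X -` eval_at X D = eval_at (UD X) (eval_at X D)"
proof -
  have "D \<in> mu1 X AA \<longleftrightarrow> eval_at X D \<in> AA" if "AA \<in> fst (UD (UD X))" for AA
    using assms by (simp add: mu1_eq_eval_at[OF that])
  then show ?thesis
    by (auto simp: mu1_in_UD)
qed

lemma vimage_UD_map_eval_at:
  assumes Y: "is_poset Y" and f: "mono_map X Y f" and D: "D \<in> fst (Dn Y)"
  shows "fst (UD X) \<inter> UD_map Y f -` eval_at Y D = eval_at X (fst X \<inter> f -` D)"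
proof -
  have "D \<in> UD_map Y f U \<longleftrightarrow> fst X \<inter> f -` D \<in> U" if "U \<in> fst (UD X)" for U
    using D by (simp add: UD_map_eq_vimage[OF Y f that])
  then show ?thesis
    by (auto simp: UD_map_in_UD)
qed

lemma mu1_eta1:
  assumes "T \<in> fst (UD X)"
  shows "mu1 X (eta1 (UD X) T) = T"
proof -
  have "mu1 X (eta1 (UD X) T) = {D \<in> fst (Dn X). eval_at X D \<in> eta1 (UD X) T}"
    by (rule mu1_eq_eval_at[OF eta1_in_UD])
  also have "\<dots> = T"
    using assms by (auto simp: eta1_def eval_at_in_Dn mem_UD_iff)
  finally show ?thesis .
qed

lemma mu1_UD_map_eta1:
  assumes T: "T \<in> fst (UD X)"
  shows "mu1 X (UD_map (UD X) (eta1 X) T) = T"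
proof -
  have "mu1 X (UD_map (UD X) (eta1 X) T) = {D \<in> fst (Dn X). eval_at X D \<in> UD_map (UD X) (eta1 X) T}"
    by (rule mu1_eq_eval_at[OF UD_map_in_UD])
  also have "\<dots> = {D \<in> fst (Dn X). fst X \<inter> eta1 X -` eval_at X D \<in> T}"
    by (simp add: UD_map_eq_vimage[OF is_poset_UD mono_map_eta1 T] eval_at_in_Dn)
  also have "\<dots> = T"
    using T by (auto simp: vimage_eta1_eval_at mem_UD_iff)
  finally show ?thesis .
qed

lemma mu1_assoc:
  assumes T: "T \<in> fst (UD (UD (UD X)))"
  shows "mu1 X (UD_map (UD X) (mu1 X) T) = mu1 X (mu1 (UD X) T)"
proof -
  have "mu1 X (UD_map (UD X) (mu1 X) T) = {D \<in> fst (Dn X). eval_at X D \<in> UD_map (UD X) (mu1 X) T}"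
    by (rule mu1_eq_eval_at[OF UD_map_in_UD])
  also have "\<dots> = {D \<in> fst (Dn X). eval_at (UD X) (eval_at X D) \<in> T}"
    by (auto simp: UD_map_eq_vimage[OF is_poset_UD mono_map_mu1 T] eval_at_in_Dn vimage_mu1_eval_at)
  also have "\<dots> = {D \<in> fst (Dn X). eval_at X D \<in> mu1 (UD X) T}"
    by (auto simp: mu1_eq_eval_at[OF T] eval_at_in_Dn)
  also have "\<dots> = mu1 X (mu1 (UD X) T)"
    by (rule mu1_eq_eval_at[OF mu1_in_UD[OF T], symmetric])
  finally show ?thesis .
qed

lemma UD_map_eta1:
  assumes Y: "is_poset Y" and f: "mono_map X Y f" and x: "x \<in> fst X"
  shows "UD_map Y f (eta1 X x) = eta1 Y (f x)"
  unfolding UD_map_eq_vimage[OF Y f eta1_in_UD]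
  using x vimage_in_Dn[OF f] by (auto simp: eta1_def)

lemma UD_map_mu1:
  assumes Y: "is_poset Y" and f: "mono_map X Y f" and T: "T \<in> fst (UD (UD X))"
  shows "UD_map Y f (mu1 X T) = mu1 Y (UD_map (UD Y) (UD_map Y f) T)"
proof -
  have "UD_map Y f (mu1 X T) = {D \<in> fst (Dn Y). eval_at X (fst X \<inter> f -` D) \<in> T}"
    unfolding UD_map_eq_vimage[OF Y f mu1_in_UD[OF T]]
    using vimage_in_Dn[OF f] by (auto simp: mu1_eq_eval_at[OF T])
  also have "\<dots> = {D \<in> fst (Dn Y). eval_at Y D \<in> UD_map (UD Y) (UD_map Y f) T}"
    by (auto simp: UD_map_eq_vimage[OF is_poset_UD mono_map_UD_map T] eval_at_in_Dn
        vimage_UD_map_eval_at[OF Y f])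
  also have "\<dots> = mu1 Y (UD_map (UD Y) (UD_map Y f) T)"
    by (rule mu1_eq_eval_at[OF UD_map_in_UD, symmetric])
  finally show ?thesis .
qed

theorem mainTheorem4:
  shows "(\<forall>X :: 'a poset. is_poset X \<longrightarrow>
            mono_map X (UD X) (eta1 X) \<and>
            mono_map (UD (UD X)) (UD X) (mu1 X) \<and>
            (\<forall>T\<in>fst (UD X). mu1 X (eta1 (UD X) T) = T) \<and>
            (\<forall>T\<in>fst (UD X). mu1 X (UD_map (UD X) (eta1 X) T) = T) \<and>
            (\<forall>T\<in>fst (UD (UD (UD X))).
                mu1 X (UD_map (UD X) (mu1 X) T) = mu1 X (mu1 (UD X) T)))
       \<and> (\<forall>(X :: 'a poset) (Y :: 'b poset) f.
            is_poset X \<longrightarrow> is_poset Y \<longrightarrow> mono_map X Y f \<longrightarrow>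
            (\<forall>x\<in>fst X. UD_map Y f (eta1 X x) = eta1 Y (f x)) \<and>
            (\<forall>T\<in>fst (UD (UD X)).
                UD_map Y f (mu1 X T) = mu1 Y (UD_map (UD Y) (UD_map Y f) T)))"
  by (intro conjI allI impI ballI mono_map_eta1 mono_map_mu1 mu1_eta1 mu1_UD_map_eta1 mu1_assoc
      UD_map_eta1 UD_map_mu1)

end
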